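(* Let $\Omega=[\alpha,\beta]$ with $\alpha<\beta$, and let $q_1,\dots,q_m\in(\alpha,\beta)$ be arbitrary points. Then $F=G_{q_m}G_{q_{m-1}}\cdots G_{q_1}0_\Omega$ is an $\Omega$-tropical polynomial all of whose non-smooth points have multiplicity at most $2$.
   Context: Let $\Omega=[\alpha,\beta]$ be a compact interval with $\alpha<\beta$. An $\Omega$-tropical series is a function $F:\Omega\to[0,\infty)$ with $F(\alpha)=F(\beta)=0$ that can be written as $F(z)=\inf_{v\in\mathbb{Z}}(a_v+zv)$ for some real numbers $a_v$; its canonical coefficients are $a_v=\sup_{z\in\Omega}(F(z)-zv)$. Such $F$ is concave piecewise linear with integer slopes; its non-smooth points are the points of $(\alpha,\beta)$ where $F$ is not differentiable, and the multiplicity of such a point $h$ is $F'(h^-)-F'(h^+)\in\mathbb{Z}_{\ge1}$. An $\Omega$-tropical polynomial is an $\Omega$-tropical series with finitely many non-smooth points. $0_\Omega$ is the zero function on $\Omega$. For $p\in(\alpha,\beta)$ the operator $G_p$ is defined as follows: if $F$ is not differentiable at $p$, then $G_pF=F$; otherwise there is a unique $w\in\mathbb{Z}$ with $F(z)=a_w+zw$ near $p$ ($a_v$ canonical coefficients of $F$), and $G_pF(z)=\inf_{v\in\mathbb{Z}}(b_v+zv)$ for $z\in\Omega$, where $b_v=a_v$ for $v\neq w$ and $b_w=\min_{v\in\mathbb{Z}\setminus\{w\}}(a_v+pv)-pw$. *)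

theory Defs
  imports "HOL-Analysis.Analysis"
begin

text \<open>Omega = {al..be}. Functions are real => real; only their values on Omega matter.\<close>

definition trop_series :: "real \<Rightarrow> real \<Rightarrow> (real \<Rightarrow> real) \<Rightarrow> bool" where
  "trop_series al be F \<longleftrightarrow>
     F al = 0 \<and> F be = 0 \<and> (\<forall>z\<in>{al..be}. F z \<ge> 0) \<and>
     (\<exists>a :: int \<Rightarrow> real. \<forall>z\<in>{al..be}.
        bdd_below (range (\<lambda>v. a v + z * of_int v)) \<and>
        F z = (INF v. a v + z * of_int v))"

definition canon_coeff :: "real \<Rightarrow> real \<Rightarrow> (real \<Rightarrow> real) \<Rightarrow> int \<Rightarrow> real" where
  "canon_coeff al be F v = (SUP z\<in>{al..be}. F z - z * of_int v)"

definition nonsmooth_pts :: "real \<Rightarrow> real \<Rightarrow> (real \<Rightarrow> real) \<Rightarrow> real set" where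
  "nonsmooth_pts al be F = {h \<in> {al<..<be}. \<not> F differentiable (at h)}"

definition left_deriv :: "(real \<Rightarrow> real) \<Rightarrow> real \<Rightarrow> real" where
  "left_deriv F h = Lim (at_left h) (\<lambda>x. (F x - F h) / (x - h))"

definition right_deriv :: "(real \<Rightarrow> real) \<Rightarrow> real \<Rightarrow> real" where
  "right_deriv F h = Lim (at_right h) (\<lambda>x. (F x - F h) / (x - h))"

definition multiplicity_at :: "(real \<Rightarrow> real) \<Rightarrow> real \<Rightarrow> real" where
  "multiplicity_at F h = left_deriv F h - right_deriv F h"

definition trop_poly :: "real \<Rightarrow> real \<Rightarrow> (real \<Rightarrow> real) \<Rightarrow> bool" where
  "trop_poly al be F \<longleftrightarrow> trop_series al be F \<and> finite (nonsmooth_pts al be F)"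

definition G_op :: "real \<Rightarrow> real \<Rightarrow> real \<Rightarrow> (real \<Rightarrow> real) \<Rightarrow> (real \<Rightarrow> real)" where
  "G_op al be p F =
    (if \<not> F differentiable (at p) then F
     else (let a = canon_coeff al be F;
               w = (THE w :: int. eventually (\<lambda>z. F z = a w + z * of_int w) (nhds p));
               b = a(w := (INF v\<in>UNIV - {w}. a v + p * of_int v) - p * of_int w)
           in (\<lambda>z. INF v. b v + z * of_int v)))"

end

theory Submission
  imports Defs
begin

text \<open>
  Every function obtained from \<open>0\<^sub>\<Omega>\<close> by the operators \<open>G\<^sub>q\<close> is, on \<open>\<Omega>\<close>, the minimum of
  finitely many affine functions with integer slopes, and its multiplicity at \<open>h\<close> is the
  difference between the largest and the smallest slope attaining the minimum at \<open>h\<close>.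
  The canonical coefficients \<open>a\<^sub>v\<close> are convex in \<open>v\<close>, and the slopes \<open>v\<close> with
  \<open>a\<^sub>v + hv = F(h)\<close> form exactly that interval of active slopes.
  If \<open>F\<close> is smooth at \<open>p\<close> with slope \<open>w\<close>, then \<open>G\<^sub>p\<close> only raises \<open>a\<^sub>w\<close>. At a point \<open>h\<close>
  either the value \<open>F(h)\<close> survives, and the new active slopes lie in the old interval, or
  \<open>w\<close> was the only active slope, and by convexity only \<open>w - 1, w, w + 1\<close> can become active.
  So the active slopes always span an interval of length at most \<open>2\<close>.
\<close>

definition min_affine :: "int set \<Rightarrow> (int \<Rightarrow> real) \<Rightarrow> real \<Rightarrow> real" where
  "min_affine S c z = Min ((\<lambda>v. c v + z * of_int v) ` S)"

definition active_slopes :: "int set \<Rightarrow> (int \<Rightarrow> real) \<Rightarrow> real \<Rightarrow> int set" where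
  "active_slopes S c z = {v \<in> S. c v + z * of_int v = min_affine S c z}"

lemma min_affine_le: "finite S \<Longrightarrow> v \<in> S \<Longrightarrow> min_affine S c z \<le> c v + z * of_int v"
  unfolding min_affine_def by (rule Min_le) auto

lemma min_affine_attained:
  assumes "finite S" "S \<noteq> {}"
  obtains v where "v \<in> S" "min_affine S c z = c v + z * of_int v"
proof -
  have "min_affine S c z \<in> (\<lambda>v. c v + z * of_int v) ` S"
    unfolding min_affine_def using assms by (intro Min_in) auto
  then show ?thesis using that by auto
qed

lemma active_slopes_subset: "active_slopes S c z \<subseteq> S"
  unfolding active_slopes_def by auto

lemma finite_active_slopes: "finite S \<Longrightarrow> finite (active_slopes S c z)"
  unfolding active_slopes_def by auto

lemma active_slopes_nonempty: "finite S \<Longrightarrow> S \<noteq> {} \<Longrightarrow> active_slopes S c z \<noteq> {}"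
  by (metis (mono_tags, lifting) active_slopes_def empty_Collect_eq min_affine_attained)

lemma Min_affine_image_nonpos_slope:
  fixes m t :: real
  assumes "finite A" "A \<noteq> {}" "t \<le> 0"
  shows "Min ((\<lambda>v. m + t * of_int v) ` A) = m + t * of_int (Max A)"
proof (rule Min_eqI)
  fix y assume "y \<in> (\<lambda>v. m + t * of_int v) ` A"
  then obtain v where "v \<in> A" "y = m + t * of_int v" by auto
  moreover have "of_int v \<le> (of_int (Max A) :: real)" using \<open>v \<in> A\<close> assms by simp
  ultimately show "m + t * of_int (Max A) \<le> y" using assms(3) by (simp add: mult_left_mono_neg)
qed (use assms in \<open>auto intro: imageI Max_in\<close>)

lemma Min_affine_image_nonneg_slope:
  fixes m t :: real
  assumes "finite A" "A \<noteq> {}" "0 \<le> t"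
  shows "Min ((\<lambda>v. m + t * of_int v) ` A) = m + t * of_int (Min A)"
proof (rule Min_eqI)
  fix y assume "y \<in> (\<lambda>v. m + t * of_int v) ` A"
  then obtain v where "v \<in> A" "y = m + t * of_int v" by auto
  moreover have "(of_int (Min A) :: real) \<le> of_int v" using \<open>v \<in> A\<close> assms by simp
  ultimately show "m + t * of_int (Min A) \<le> y" using assms(3) by (simp add: mult_left_mono)
qed (use assms in \<open>auto intro: imageI Min_in\<close>)

text \<open>Lines that are not active at \<open>z\<close> stay strictly above an active one near \<open>z\<close>.\<close>

lemma min_affine_eventually_eq_active:
  assumes S: "finite S" "S \<noteq> {}"
  shows "eventually (\<lambda>y. min_affine S c y = min_affine (active_slopes S c z) c y) (nhds z)"
proof -
  define A where "A = active_slopes S c z"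
  have A: "finite A" "A \<noteq> {}" "A \<subseteq> S"
    using S active_slopes_nonempty finite_active_slopes active_slopes_subset unfolding A_def by auto
  then obtain u where u: "u \<in> A" by auto
  have "eventually (\<lambda>y. c u + y * of_int u < c v + y * of_int v) (nhds z)" if v: "v \<in> S - A" for v
  proof -
    have "0 < (c v + z * of_int v) - (c u + z * of_int u)"
      using u v min_affine_le[OF S(1), of v c z] by (auto simp: A_def active_slopes_def)
    moreover have "((\<lambda>y. (c v + y * of_int v) - (c u + y * of_int u)) \<longlongrightarrow>
        (c v + z * of_int v) - (c u + z * of_int u)) (nhds z)"
      by (intro tendsto_intros filterlim_ident)
    ultimately have "eventually (\<lambda>y. 0 < (c v + y * of_int v) - (c u + y * of_int u)) (nhds z)"
      by (rule order_tendstoD(1)[rotated])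
    then show ?thesis by simp
  qed
  then have "eventually (\<lambda>y. \<forall>v\<in>S - A. c u + y * of_int u < c v + y * of_int v) (nhds z)"
    using S(1) by (intro eventually_ball_finite) auto
  then show ?thesis unfolding A_def[symmetric]
  proof (rule eventually_mono)
    fix y assume below: "\<forall>v\<in>S - A. c u + y * of_int u < c v + y * of_int v"
    show "min_affine S c y = min_affine A c y"
    proof (rule antisym)
      show "min_affine S c y \<le> min_affine A c y"
        unfolding min_affine_def using A S by (intro Min_antimono) auto
      obtain v where v: "v \<in> S" "min_affine S c y = c v + y * of_int v"
        using min_affine_attained[OF S] by blast
      show "min_affine A c y \<le> min_affine S c y"
      proof (cases "v \<in> A")
        case False
        then have "c u + y * of_int u < c v + y * of_int v" using below v by blast
        then show ?thesis using min_affine_le[OF A(1) u, of c y] v by linarith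
      qed (use v min_affine_le[OF A(1)] in auto)
    qed
  qed
qed

lemma min_affine_eventually_eq:
  assumes S: "finite S" "S \<noteq> {}"
  shows "eventually (\<lambda>y. min_affine S c y = min_affine S c z + (y - z) *
    (if y \<le> z then of_int (Max (active_slopes S c z)) else of_int (Min (active_slopes S c z))))
    (nhds z)"
proof (rule eventually_mono[OF min_affine_eventually_eq_active[OF S, of c z]])
  fix y
  define A where "A = active_slopes S c z"
  define m where "m = min_affine S c z"
  have A: "finite A" "A \<noteq> {}"
    using S active_slopes_nonempty finite_active_slopes unfolding A_def by auto
  have "c v + y * of_int v = m + (y - z) * of_int v" if "v \<in> A" for v
    using that unfolding A_def m_def active_slopes_def by (auto simp: algebra_simps)
  then have "min_affine A c y = Min ((\<lambda>v. m + (y - z) * of_int v) ` A)"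
    unfolding min_affine_def by (intro arg_cong[where f = Min] image_cong) auto
  moreover assume "min_affine S c y = min_affine A c y"
  ultimately show "min_affine S c y = m + (y - z) * (if y \<le> z then of_int (Max A) else of_int (Min A))"
    using Min_affine_image_nonpos_slope[OF A, of "y - z" m]
      Min_affine_image_nonneg_slope[OF A, of "y - z" m] by auto
qed

lemma cINF_eq_Min_dominating:
  fixes f :: "'a \<Rightarrow> 'b :: conditionally_complete_linorder"
  assumes "finite T" "T \<noteq> {}" "T \<subseteq> X" "\<And>x. x \<in> X \<Longrightarrow> \<exists>t\<in>T. f t \<le> f x"
  shows "(INF x\<in>X. f x) = Min (f ` T)"
proof (rule cInf_eq_minimum)
  show "Min (f ` T) \<in> f ` X" using assms Min_in[of "f ` T"] by blast
  fix y assume "y \<in> f ` X"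
  then show "Min (f ` T) \<le> y"
    using assms by (metis (no_types, lifting) Min_le finite_imageI imageE image_eqI order_trans)
qed

lemma convex_int_seq_strict_mono:
  fixes G :: "int \<Rightarrow> real"
  assumes convex: "\<And>v. 2 * G v \<le> G (v - 1) + G (v + 1)" and start: "G w < G (w + 1)"
    and "w \<le> u" "u < v"
  shows "G u < G v"
proof -
  have increasing: "G k < G (k + 1)" if "w \<le> k" for k
    using that
  proof (induction k rule: int_ge_induct)
    case (step k)
    then show ?case using convex[of "k + 1"] by simp
  qed (rule start)
  show ?thesis
    using \<open>u < v\<close>
  proof (induction v rule: int_gr_induct)
    case base then show ?case using increasing \<open>w \<le> u\<close> by simp
  next
    case (step k) then show ?case using \<open>w \<le> u\<close> increasing[of k] by simp
  qed
qed

locale finite_trop_rep =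
  fixes al be :: real and F :: "real \<Rightarrow> real" and S :: "int set" and c :: "int \<Rightarrow> real"
  assumes al_less_be: "al < be" and finite_S: "finite S" and S_nonempty: "S \<noteq> {}"
    and F_eq: "\<And>z. z \<in> {al..be} \<Longrightarrow> F z = min_affine S c z"
    and F_al: "F al = 0" and F_be: "F be = 0"
begin

abbreviation act :: "real \<Rightarrow> int set" where "act \<equiv> active_slopes S c"

abbreviation a :: "int \<Rightarrow> real" where "a \<equiv> canon_coeff al be F"

lemma act_finite_nonempty: "finite (act z)" "act z \<noteq> {}"
  using finite_S S_nonempty by (auto simp: finite_active_slopes active_slopes_nonempty)

lemma Max_Min_act_in_act: "Max (act z) \<in> act z" "Min (act z) \<in> act z"
  using act_finite_nonempty by auto

lemma F_eventually_eq:
  assumes z: "z \<in> {al<..<be}"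
  shows "eventually (\<lambda>y. F y = F z + (y - z) *
    (if y \<le> z then of_int (Max (act z)) else of_int (Min (act z)))) (nhds z)"
proof -
  have "eventually (\<lambda>y. y \<in> {al<..<be}) (nhds z)"
    using z by (intro eventually_nhds_in_open) auto
  with min_affine_eventually_eq[OF finite_S S_nonempty, of c z] show ?thesis
    by eventually_elim (use z F_eq in auto)
qed

lemma left_quotient_tendsto:
  "z \<in> {al<..<be} \<Longrightarrow> ((\<lambda>y. (F y - F z) / (y - z)) \<longlongrightarrow> of_int (Max (act z))) (at_left z)"
  by (rule tendsto_eventually, unfold eventually_at_filter, rule eventually_mono[OF F_eventually_eq])
    auto

lemma right_quotient_tendsto:
  "z \<in> {al<..<be} \<Longrightarrow> ((\<lambda>y. (F y - F z) / (y - z)) \<longlongrightarrow> of_int (Min (act z))) (at_right z)"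
  by (rule tendsto_eventually, unfold eventually_at_filter, rule eventually_mono[OF F_eventually_eq])
    auto

lemma multiplicity_at_eq:
  "z \<in> {al<..<be} \<Longrightarrow> multiplicity_at F z = of_int (Max (act z)) - of_int (Min (act z))"
  unfolding multiplicity_at_def left_deriv_def right_deriv_def
  using tendsto_Lim[OF _ left_quotient_tendsto] tendsto_Lim[OF _ right_quotient_tendsto] by simp

lemma differentiable_iff:
  assumes z: "z \<in> {al<..<be}"
  shows "F differentiable (at z) \<longleftrightarrow> Max (act z) = Min (act z)"
proof
  assume "F differentiable (at z)"
  then obtain D where "((\<lambda>y. (F y - F z) / (y - z)) \<longlongrightarrow> D) (at z)"
    by (auto simp: real_differentiable_def has_field_derivative_iff)
  then have "((\<lambda>y. (F y - F z) / (y - z)) \<longlongrightarrow> D) (at_left z)"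
    "((\<lambda>y. (F y - F z) / (y - z)) \<longlongrightarrow> D) (at_right z)"
    using filterlim_at_split by blast+
  then have "D = of_int (Max (act z))" "D = of_int (Min (act z))"
    using tendsto_unique[OF _ _ left_quotient_tendsto[OF z]]
      tendsto_unique[OF _ _ right_quotient_tendsto[OF z]] by simp_all
  then show "Max (act z) = Min (act z)" by simp
next
  assume eq: "Max (act z) = Min (act z)"
  have "eventually (\<lambda>y. F y = F z + (y - z) * of_int (Max (act z))) (nhds z)"
    by (rule eventually_mono[OF F_eventually_eq[OF z]]) (use eq in auto)
  moreover have "((\<lambda>y. F z + (y - z) * of_int (Max (act z))) has_real_derivative
      of_int (Max (act z))) (at z)"
    by (auto intro!: derivative_eq_intros)
  ultimately have "(F has_real_derivative of_int (Max (act z))) (at z)"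
    by (simp add: DERIV_cong_ev)
  then show "F differentiable (at z)" by (auto simp: real_differentiable_def)
qed

lemma finite_nonsmooth_pts: "finite (nonsmooth_pts al be F)"
proof (rule finite_subset)
  let ?crossing = "\<lambda>(u, v). (c u - c v) / (of_int v - of_int u :: real)"
  show "nonsmooth_pts al be F \<subseteq> ?crossing ` (S \<times> S)"
  proof
    fix h assume "h \<in> nonsmooth_pts al be F"
    then have "of_int (Max (act h)) - of_int (Min (act h)) \<noteq> (0 :: real)"
      using differentiable_iff unfolding nonsmooth_pts_def by auto
    moreover have "h * (of_int (Max (act h)) - of_int (Min (act h))) = c (Min (act h)) - c (Max (act h))"
      using Max_Min_act_in_act[of h] unfolding active_slopes_def by (auto simp: algebra_simps)
    ultimately have "h = ?crossing (Min (act h), Max (act h))"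
      by (simp add: eq_divide_eq)
    then show "h \<in> ?crossing ` (S \<times> S)"
      using Max_Min_act_in_act[of h] active_slopes_subset by blast
  qed
qed (use finite_S in auto)

lemma bdd_above_canon: "bdd_above ((\<lambda>y. F y - y * of_int v) ` {al..be})"
proof -
  obtain u where u: "u \<in> S" using S_nonempty by auto
  have "F y - y * of_int v \<le> c u + (\<bar>al\<bar> + \<bar>be\<bar>) * \<bar>of_int u - of_int v\<bar>" if y: "y \<in> {al..be}" for y
  proof -
    have "F y - y * of_int v \<le> c u + y * (of_int u - of_int v)"
      using F_eq[OF y] min_affine_le[OF finite_S u, of c y] by (simp add: algebra_simps)
    also have "\<dots> \<le> c u + \<bar>y\<bar> * \<bar>of_int u - of_int v\<bar>"
      by (metis abs_ge_self abs_mult add_left_mono)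
    also have "\<dots> \<le> c u + (\<bar>al\<bar> + \<bar>be\<bar>) * \<bar>of_int u - of_int v\<bar>"
      using y by (intro add_left_mono mult_right_mono) auto
    finally show ?thesis .
  qed
  then show ?thesis by (intro bdd_aboveI2)
qed

lemma F_le_canon: "z \<in> {al..be} \<Longrightarrow> F z \<le> a v + z * of_int v"
  using cSUP_upper[OF _ bdd_above_canon, of z v] unfolding canon_coeff_def by simp

lemma canon_coeff_le: "(\<And>y. y \<in> {al..be} \<Longrightarrow> F y - y * of_int v \<le> B) \<Longrightarrow> a v \<le> B"
  unfolding canon_coeff_def using al_less_be by (intro cSUP_least) auto

lemma canon_coeff_le_coeff: "v \<in> S \<Longrightarrow> a v \<le> c v"
  using F_eq min_affine_le[OF finite_S] by (intro canon_coeff_le) (simp add: algebra_simps)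

lemma canon_affine_eq_on_act: "z \<in> {al..be} \<Longrightarrow> v \<in> act z \<Longrightarrow> a v + z * of_int v = F z"
  using F_le_canon[of z v] canon_coeff_le_coeff[of v] F_eq[of z] active_slopes_subset[of S c z]
  unfolding active_slopes_def by fastforce

lemma canon_coeff_above_Max: assumes "Max S \<le> v" shows "a v = - al * of_int v"
proof (rule antisym)
  obtain u where u: "u \<in> act al" using act_finite_nonempty by blast
  then have "u \<in> S" "c u + al * of_int u = 0"
    using active_slopes_subset F_eq[of al] F_al al_less_be unfolding active_slopes_def by auto
  moreover have "u \<le> v" using \<open>u \<in> S\<close> finite_S assms by (meson Max_ge order_trans)
  ultimately show "a v \<le> - al * of_int v"
  proof (intro canon_coeff_le)
    fix y assume y: "y \<in> {al..be}"
    have "F y \<le> c u + y * of_int u" using F_eq[OF y] min_affine_le[OF finite_S \<open>u \<in> S\<close>] by simp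
    also have "\<dots> = (y - al) * of_int u" using \<open>c u + al * of_int u = 0\<close> by (simp add: algebra_simps)
    also have "\<dots> \<le> (y - al) * of_int v" using y \<open>u \<le> v\<close> by (intro mult_left_mono) auto
    finally show "F y - y * of_int v \<le> - al * of_int v" by (simp add: algebra_simps)
  qed
  show "- al * of_int v \<le> a v" using F_le_canon[of al v] al_less_be F_al by simp
qed

lemma canon_coeff_below_Min: assumes "v \<le> Min S" shows "a v = - be * of_int v"
proof (rule antisym)
  obtain u where u: "u \<in> act be" using act_finite_nonempty by blast
  then have "u \<in> S" "c u + be * of_int u = 0"
    using active_slopes_subset F_eq[of be] F_be al_less_be unfolding active_slopes_def by auto
  moreover have "v \<le> u" using \<open>u \<in> S\<close> finite_S assms by (meson Min_le order_trans)
  ultimately show "a v \<le> - be * of_int v"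
  proof (intro canon_coeff_le)
    fix y assume y: "y \<in> {al..be}"
    have "F y \<le> c u + y * of_int u" using F_eq[OF y] min_affine_le[OF finite_S \<open>u \<in> S\<close>] by simp
    also have "\<dots> = (be - y) * - of_int u" using \<open>c u + be * of_int u = 0\<close> by (simp add: algebra_simps)
    also have "\<dots> \<le> (be - y) * - of_int v" using y \<open>v \<le> u\<close> by (intro mult_left_mono) auto
    finally show "F y - y * of_int v \<le> - be * of_int v" by (simp add: algebra_simps)
  qed
  show "- be * of_int v \<le> a v" using F_le_canon[of be v] al_less_be F_be by simp
qed

lemma canon_coeff_convex: "2 * a v \<le> a (v - 1) + a (v + 1)"
proof -
  have "a v \<le> (a (v - 1) + a (v + 1)) / 2"
  proof (rule canon_coeff_le)
    fix y assume "y \<in> {al..be}"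
    then have "F y \<le> a (v - 1) + y * of_int (v - 1)" "F y \<le> a (v + 1) + y * of_int (v + 1)"
      by (rule F_le_canon)+
    then show "F y - y * of_int v \<le> (a (v - 1) + a (v + 1)) / 2" by (simp add: algebra_simps)
  qed
  then show ?thesis by simp
qed

lemma canon_affine_eq_between:
  assumes z: "z \<in> {al..be}" and l: "a l + z * of_int l = F z" and r: "a r + z * of_int r = F z"
    and "l \<le> v" "v \<le> r"
  shows "a v + z * of_int v = F z"
proof -
  have "a v \<le> F z - z * of_int v"
  proof (rule canon_coeff_le)
    fix y assume y: "y \<in> {al..be}"
    show "F y - y * of_int v \<le> F z - z * of_int v"
    proof (cases "z \<le> y")
      case True
      then have "(y - z) * of_int l \<le> (y - z) * of_int v" using \<open>l \<le> v\<close> by (intro mult_left_mono) auto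
      then show ?thesis using F_le_canon[OF y, of l] l by (simp add: algebra_simps)
    next
      case False
      then have "(z - y) * of_int v \<le> (z - y) * of_int r" using \<open>v \<le> r\<close> by (intro mult_left_mono) auto
      then show ?thesis using F_le_canon[OF y, of r] r by (simp add: algebra_simps)
    qed
  qed
  then show ?thesis using F_le_canon[OF z, of v] by simp
qed

text \<open>Compare the line of slope \<open>v\<close> with \<open>F\<close> on the side of \<open>z\<close> where \<open>F\<close> has the active slope.\<close>

lemma F_less_canon_affine_above_act:
  assumes z: "z \<in> {al<..<be}" and v: "Max (act z) < v"
  shows "F z < a v + z * of_int v"
proof -
  have "eventually (\<lambda>y. F y = F z + (y - z) * of_int (Max (act z))) (at_left z)"
    unfolding eventually_at_filter by (rule eventually_mono[OF F_eventually_eq[OF z]]) auto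
  moreover have "eventually (\<lambda>y. y \<in> {al<..<z}) (at_left z)"
    using z by (intro eventually_at_left_real) auto
  ultimately obtain y where y: "F y = F z + (y - z) * of_int (Max (act z))" "y \<in> {al<..<z}"
    using eventually_happens[OF eventually_conj] by fastforce
  have "0 < (z - y) * (of_int v - of_int (Max (act z)))" using y v by (intro mult_pos_pos) auto
  then show ?thesis using F_le_canon[of y v] y z by (simp add: algebra_simps)
qed

lemma F_less_canon_affine_below_act:
  assumes z: "z \<in> {al<..<be}" and v: "v < Min (act z)"
  shows "F z < a v + z * of_int v"
proof -
  have "eventually (\<lambda>y. F y = F z + (y - z) * of_int (Min (act z))) (at_right z)"
    unfolding eventually_at_filter by (rule eventually_mono[OF F_eventually_eq[OF z]]) auto
  moreover have "eventually (\<lambda>y. y \<in> {z<..<be}) (at_right z)"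
    using z by (intro eventually_at_right_real) auto
  ultimately obtain y where y: "F y = F z + (y - z) * of_int (Min (act z))" "y \<in> {z<..<be}"
    using eventually_happens[OF eventually_conj] by fastforce
  have "0 < (y - z) * (of_int (Min (act z)) - of_int v)" using y v by (intro mult_pos_pos) auto
  then show ?thesis using F_le_canon[of y v] y z by (simp add: algebra_simps)
qed

lemma canon_affine_eq_iff:
  assumes z: "z \<in> {al<..<be}"
  shows "a v + z * of_int v = F z \<longleftrightarrow> v \<in> {Min (act z)..Max (act z)}"
proof
  assume "a v + z * of_int v = F z"
  then show "v \<in> {Min (act z)..Max (act z)}"
    using F_less_canon_affine_above_act[OF z] F_less_canon_affine_below_act[OF z]
    by (metis atLeastAtMost_iff less_irrefl not_le)
next
  assume "v \<in> {Min (act z)..Max (act z)}"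
  moreover have "z \<in> {al..be}" using z by simp
  ultimately show "a v + z * of_int v = F z"
    using canon_affine_eq_between canon_affine_eq_on_act Max_Min_act_in_act by (meson atLeastAtMost_iff)
qed

lemma canon_affine_mono_above_Max:
  assumes z: "z \<in> {al..be}" and "Max S \<le> u" "u \<le> v"
  shows "a u + z * of_int u \<le> a v + z * of_int v"
proof -
  have "(z - al) * of_int u \<le> (z - al) * of_int v" using assms by (intro mult_left_mono) auto
  then show ?thesis using assms canon_coeff_above_Max by (simp add: algebra_simps)
qed

lemma canon_affine_antimono_below_Min:
  assumes z: "z \<in> {al..be}" and "v \<le> u" "u \<le> Min S"
  shows "a u + z * of_int u \<le> a v + z * of_int v"
proof -
  have "(be - z) * of_int v \<le> (be - z) * of_int u" using assms by (intro mult_left_mono) auto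
  then show ?thesis using assms canon_coeff_below_Min by (simp add: algebra_simps)
qed

lemma trop_series:
  assumes "\<And>z. z \<in> {al..be} \<Longrightarrow> 0 \<le> F z"
  shows "trop_series al be F"
  unfolding trop_series_def
proof (intro conjI ballI exI[where x = a])
  fix z assume z: "z \<in> {al..be}"
  show "bdd_below (range (\<lambda>v. a v + z * of_int v))"
    using F_le_canon[OF z] by (intro bdd_belowI2)
  obtain u where "u \<in> act z" using act_finite_nonempty by blast
  then show "F z = (INF v. a v + z * of_int v)"
    using canon_affine_eq_on_act[OF z] F_le_canon[OF z]
    by (intro cInf_eq_minimum[symmetric]) (auto intro: range_eqI[where x = u])
qed (use F_al F_be assms in auto)

end

locale G_op_step = finite_trop_rep +
  fixes p :: real
  assumes F_nonneg: "\<And>z. z \<in> {al..be} \<Longrightarrow> 0 \<le> F z"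
    and act_spread: "\<And>z. z \<in> {al<..<be} \<Longrightarrow> Max (act z) - Min (act z) \<le> 2"
    and p_interior: "p \<in> {al<..<be}"
    and F_differentiable: "F differentiable (at p)"
begin

definition w :: int where "w = Max (act p)"

lemma Max_Min_act_p: "Max (act p) = w" "Min (act p) = w"
  using differentiable_iff[OF p_interior] F_differentiable unfolding w_def by auto

lemma w_in_S: "w \<in> S"
  using Max_Min_act_in_act(1)[of p] active_slopes_subset unfolding w_def by blast

lemma canon_affine_eq_at_p_iff: "a v + p * of_int v = F p \<longleftrightarrow> v = w"
  using canon_affine_eq_iff[OF p_interior] Max_Min_act_p by auto

lemma F_less_canon_affine_at_p: "v \<noteq> w \<Longrightarrow> F p < a v + p * of_int v"
  using canon_affine_eq_at_p_iff F_le_canon[of p v] p_interior by force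

lemma THE_slope_at_p: "(THE v. eventually (\<lambda>z. F z = a v + z * of_int v) (nhds p)) = w"
proof (rule the_equality)
  show ev: "eventually (\<lambda>z. F z = a w + z * of_int w) (nhds p)"
  proof (rule eventually_mono[OF F_eventually_eq[OF p_interior]])
    fix y
    assume "F y = F p + (y - p) * (if y \<le> p then of_int (Max (act p)) else of_int (Min (act p)))"
    then have "F y = F p + (y - p) * of_int w" using Max_Min_act_p by simp
    then show "F y = a w + y * of_int w"
      using canon_affine_eq_at_p_iff[of w] by (simp add: algebra_simps)
  qed
  fix v assume "eventually (\<lambda>z. F z = a v + z * of_int v) (nhds p)"
  with ev have eq: "eventually (\<lambda>z. a w + z * of_int w = a v + z * of_int v) (nhds p)"
    by (rule eventually_elim2) simp
  have "((\<lambda>z. a w + z * of_int w) has_real_derivative of_int w) (at p)"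
    by (auto intro!: derivative_eq_intros)
  then have "((\<lambda>z. a v + z * of_int v) has_real_derivative of_int w) (at p)"
    using DERIV_cong_ev[OF refl eq refl] by simp
  moreover have "((\<lambda>z. a v + z * of_int v) has_real_derivative of_int v) (at p)"
    by (auto intro!: derivative_eq_intros)
  ultimately have "(of_int w :: real) = of_int v" by (rule DERIV_unique)
  then show "v = w" by simp
qed

text \<open>Outside \<open>S_ext\<close> the canonical lines are dominated, so infima over \<open>\<int>\<close> become finite minima.\<close>

definition S_ext :: "int set" where "S_ext = {Min S - 1..Max S + 1}"

lemma finite_S_ext: "finite S_ext"
  unfolding S_ext_def by simp

lemma S_subset_S_ext: "S \<subseteq> S_ext"
proof
  fix v assume "v \<in> S"
  then have "Min S \<le> v" "v \<le> Max S" using finite_S by auto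
  then show "v \<in> S_ext" unfolding S_ext_def by simp
qed

lemma S_ext_ends: "Max S + 1 \<in> S_ext - {w}" "Min S - 1 \<in> S_ext - {w}"
proof -
  have "Min S \<le> w" "w \<le> Max S" using w_in_S finite_S by auto
  then show "Max S + 1 \<in> S_ext - {w}" "Min S - 1 \<in> S_ext - {w}" unfolding S_ext_def by auto
qed

lemma S_ext_nonempty: "S_ext \<noteq> {}"
  using S_ext_ends by auto

lemma canon_affine_dominated_in_S_ext:
  assumes z: "z \<in> {al..be}" and "v \<notin> S_ext"
  shows "\<exists>u\<in>S_ext - {w}. a u + z * of_int u \<le> a v + z * of_int v"
proof -
  have "Max S + 1 < v \<or> v < Min S - 1" using assms unfolding S_ext_def by auto
  then show ?thesis
  proof
    assume "Max S + 1 < v"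
    then have "a (Max S + 1) + z * of_int (Max S + 1) \<le> a v + z * of_int v"
      by (intro canon_affine_mono_above_Max[OF z]) auto
    then show ?thesis using S_ext_ends(1) by blast
  next
    assume "v < Min S - 1"
    then have "a (Min S - 1) + z * of_int (Min S - 1) \<le> a v + z * of_int v"
      by (intro canon_affine_antimono_below_Min[OF z]) auto
    then show ?thesis using S_ext_ends(2) by blast
  qed
qed

definition m :: real where "m = (INF v\<in>UNIV - {w}. a v + p * of_int v)"

lemma m_eq_Min: "m = Min ((\<lambda>v. a v + p * of_int v) ` (S_ext - {w}))"
  unfolding m_def
proof (rule cINF_eq_Min_dominating)
  show "finite (S_ext - {w})" "S_ext - {w} \<noteq> {}" "S_ext - {w} \<subseteq> UNIV - {w}"
    using finite_S_ext S_ext_ends by auto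
  fix v assume "v \<in> UNIV - {w}"
  then show "\<exists>u\<in>S_ext - {w}. a u + p * of_int u \<le> a v + p * of_int v"
    using canon_affine_dominated_in_S_ext[of p v] p_interior by (cases "v \<in> S_ext") auto
qed

lemma F_p_less_m: "F p < m"
proof -
  have "finite ((\<lambda>v. a v + p * of_int v) ` (S_ext - {w}))"
    "(\<lambda>v. a v + p * of_int v) ` (S_ext - {w}) \<noteq> {}"
    using finite_S_ext S_ext_ends by auto
  then show ?thesis unfolding m_eq_Min using F_less_canon_affine_at_p by simp
qed

definition b :: "int \<Rightarrow> real" where "b = a(w := m - p * of_int w)"

lemma canon_coeff_less_b: "a w < b w"
  using F_p_less_m canon_affine_eq_at_p_iff[of w] unfolding b_def by simp

lemma canon_coeff_le_b: "a v \<le> b v"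
  using canon_coeff_less_b unfolding b_def by (cases "v = w") auto

lemma b_eq_canon_coeff: "v \<noteq> w \<Longrightarrow> b v = a v"
  unfolding b_def by simp

definition H :: "real \<Rightarrow> real" where "H = (\<lambda>z. INF v. b v + z * of_int v)"

lemma G_op_eq_H: "G_op al be p F = H"
  using F_differentiable unfolding G_op_def H_def b_def m_def Let_def THE_slope_at_p by simp

lemma H_eq:
  assumes z: "z \<in> {al..be}"
  shows "H z = min_affine S_ext b z"
  unfolding H_def min_affine_def
proof (rule cINF_eq_Min_dominating)
  show "finite S_ext" "S_ext \<noteq> {}" "S_ext \<subseteq> UNIV"
    using finite_S_ext S_ext_nonempty by auto
  fix v :: int
  show "\<exists>u\<in>S_ext. b u + z * of_int u \<le> b v + z * of_int v"
  proof (cases "v \<in> S_ext")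
    case False
    then obtain u where "u \<in> S_ext" "u \<noteq> w" "a u + z * of_int u \<le> a v + z * of_int v"
      using canon_affine_dominated_in_S_ext[OF z] by blast
    moreover have "v \<noteq> w" using False w_in_S S_subset_S_ext by auto
    ultimately show ?thesis using b_eq_canon_coeff by metis
  qed auto
qed

lemma F_le_H:
  assumes z: "z \<in> {al..be}"
  shows "F z \<le> H z"
proof -
  obtain v where "min_affine S_ext b z = b v + z * of_int v"
    using min_affine_attained[OF finite_S_ext S_ext_nonempty] by metis
  then show ?thesis using H_eq[OF z] F_le_canon[OF z, of v] canon_coeff_le_b[of v] by simp
qed

lemma H_al: "H al = 0"
proof -
  have al: "al \<in> {al..be}" using al_less_be by simp
  have "H al \<le> b (Max S + 1) + al * of_int (Max S + 1)"
    using H_eq[OF al] min_affine_le[OF finite_S_ext DiffD1[OF S_ext_ends(1)]] by simp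
  also have "\<dots> = 0"
    using b_eq_canon_coeff canon_coeff_above_Max[of "Max S + 1"] S_ext_ends(1) by simp
  finally show ?thesis using F_le_H[OF al] F_al by simp
qed

lemma H_be: "H be = 0"
proof -
  have be: "be \<in> {al..be}" using al_less_be by simp
  have "H be \<le> b (Min S - 1) + be * of_int (Min S - 1)"
    using H_eq[OF be] min_affine_le[OF finite_S_ext DiffD1[OF S_ext_ends(2)]] by simp
  also have "\<dots> = 0"
    using b_eq_canon_coeff canon_coeff_below_Min[of "Min S - 1"] S_ext_ends(2) by simp
  finally show ?thesis using F_le_H[OF be] F_be by simp
qed

lemma finite_trop_rep_H: "finite_trop_rep al be H S_ext b"
  using al_less_be finite_S_ext S_ext_nonempty H_eq H_al H_be by unfold_locales

lemma act_H_subset_if_H_eq_F: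
  assumes z: "z \<in> {al<..<be}" and "H z = F z"
  shows "active_slopes S_ext b z \<subseteq> {Min (act z)..Max (act z)}"
proof
  fix v assume "v \<in> active_slopes S_ext b z"
  then have v: "b v + z * of_int v = F z"
    using H_eq[of z] z \<open>H z = F z\<close> unfolding active_slopes_def by auto
  moreover have "v \<noteq> w"
    using v canon_coeff_less_b F_le_canon[of z w] z by force
  ultimately show "v \<in> {Min (act z)..Max (act z)}"
    using canon_affine_eq_iff[OF z] b_eq_canon_coeff by simp
qed

text \<open>
  If \<open>G\<^sub>p\<close> raises the value at \<open>z\<close>, then \<open>w\<close> was the only slope of \<open>F\<close> at \<open>z\<close>, and the convex
  sequence \<open>a\<^sub>v + zv\<close> increases strictly on both sides of \<open>w\<close>.
\<close>

lemma act_H_subset_if_F_less_H: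
  assumes z: "z \<in> {al<..<be}" and "F z < H z"
  shows "active_slopes S_ext b z \<subseteq> {w - 1..w + 1}"
proof
  let ?G = "\<lambda>v. a v + z * of_int v"
  have z': "z \<in> {al..be}" using z by simp
  have H_le: "H z \<le> b u + z * of_int u" if "u \<in> S_ext" for u
    using H_eq[OF z'] min_affine_le[OF finite_S_ext that] by simp
  have only_w: "v = w" if "?G v = F z" for v
  proof (rule ccontr)
    assume "v \<noteq> w"
    have "v \<in> {Min (act z)..Max (act z)}" using that canon_affine_eq_iff[OF z] by blast
    then have "v \<in> {Min S..Max S}"
      using Max_Min_act_in_act[of z] active_slopes_subset finite_S
      by (meson Max_ge Min_le atLeastAtMost_iff order_trans subsetD)
    then have "v \<in> S_ext" unfolding S_ext_def by auto
    then show False using H_le[of v] \<open>F z < H z\<close> that b_eq_canon_coeff[OF \<open>v \<noteq> w\<close>] by simp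
  qed
  have G_above: "F z < ?G v" if "v \<noteq> w" for v
    using only_w that F_le_canon[OF z'] by (metis order_le_imp_less_or_eq)
  have "w \<in> {Min (act z)..Max (act z)}"
    using only_w canon_affine_eq_iff[OF z] Max_Min_act_in_act[of z] canon_affine_eq_on_act[OF z']
    by metis
  then have G_w: "?G w = F z" using canon_affine_eq_iff[OF z] by blast
  have convex: "2 * ?G v \<le> ?G (v - 1) + ?G (v + 1)" for v
    using canon_coeff_convex[of v] by (simp add: algebra_simps)
  have "Min S \<le> w" "w \<le> Max S" using w_in_S finite_S by auto
  then have neighbours: "w + 1 \<in> S_ext" "w - 1 \<in> S_ext" unfolding S_ext_def by auto
  fix v assume "v \<in> active_slopes S_ext b z"
  then have v: "b v + z * of_int v = H z" using H_eq[OF z'] unfolding active_slopes_def by simp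
  show "v \<in> {w - 1..w + 1}"
  proof (rule ccontr)
    assume "v \<notin> {w - 1..w + 1}"
    then consider "w + 1 < v" | "v < w - 1" by fastforce
    then show False
    proof cases
      case 1
      have "?G (w + 1) < ?G v"
        using convex_int_seq_strict_mono[of ?G w "w + 1" v] convex G_above[of "w + 1"] G_w 1 by simp
      then show False using v H_le[OF neighbours(1)] b_eq_canon_coeff 1 by simp
    next
      case 2
      have "?G (- (- w + 1)) < ?G (- (- v))"
        using convex_int_seq_strict_mono[of "\<lambda>v. ?G (- v)" "- w" "- w + 1" "- v"]
          convex[of "- _"] G_above[of "w - 1"] G_w 2 by (simp add: algebra_simps)
      then show False using v H_le[OF neighbours(2)] b_eq_canon_coeff 2 by simp
    qed
  qed
qed

lemma act_H_spread:
  assumes z: "z \<in> {al<..<be}"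
  shows "Max (active_slopes S_ext b z) - Min (active_slopes S_ext b z) \<le> 2"
proof -
  interpret H: finite_trop_rep al be H S_ext b by (rule finite_trop_rep_H)
  consider "H z = F z" | "F z < H z" using F_le_H[of z] z by fastforce
  then have "H.act z \<subseteq> {Min (act z)..Max (act z)} \<or> H.act z \<subseteq> {w - 1..w + 1}"
    using act_H_subset_if_H_eq_F[OF z] act_H_subset_if_F_less_H[OF z] by cases auto
  then have "{Max (H.act z), Min (H.act z)} \<subseteq> {Min (act z)..Max (act z)} \<or>
      {Max (H.act z), Min (H.act z)} \<subseteq> {w - 1..w + 1}"
    using H.Max_Min_act_in_act[of z] by blast
  then show ?thesis using act_spread[OF z] by auto
qed

end

definition trop_rep_mult_le_2 :: "real \<Rightarrow> real \<Rightarrow> (real \<Rightarrow> real) \<Rightarrow> bool" where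
  "trop_rep_mult_le_2 al be F \<longleftrightarrow> (\<exists>S c. finite_trop_rep al be F S c \<and> (\<forall>z\<in>{al..be}. 0 \<le> F z) \<and>
     (\<forall>z\<in>{al<..<be}. Max (active_slopes S c z) - Min (active_slopes S c z) \<le> 2))"

lemma trop_rep_mult_le_2_zero:
  assumes "al < be"
  shows "trop_rep_mult_le_2 al be (\<lambda>z. 0)"
proof -
  have min0: "min_affine {0} (\<lambda>_. 0) z = 0" for z
    unfolding min_affine_def by simp
  have act0: "active_slopes {0} (\<lambda>_. 0) z = {0}" for z
    unfolding active_slopes_def min0 by auto
  have "finite_trop_rep al be (\<lambda>z. 0) {0} (\<lambda>_. 0)"
    using assms min0 by unfold_locales auto
  then show ?thesis
    unfolding trop_rep_mult_le_2_def by (intro exI[of _ "{0}"] exI[of _ "\<lambda>_. 0"]) (simp add: act0)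
qed

lemma trop_rep_mult_le_2_G_op:
  assumes F: "trop_rep_mult_le_2 al be F" and p: "p \<in> {al<..<be}"
  shows "trop_rep_mult_le_2 al be (G_op al be p F)"
proof (cases "F differentiable (at p)")
  case False
  then show ?thesis using F by (simp add: G_op_def)
next
  case True
  from F obtain S c where "finite_trop_rep al be F S c" "\<forall>z\<in>{al..be}. 0 \<le> F z"
    "\<forall>z\<in>{al<..<be}. Max (active_slopes S c z) - Min (active_slopes S c z) \<le> 2"
    unfolding trop_rep_mult_le_2_def by blast
  then interpret G_op_step al be F S c p
    using p True by (intro G_op_step.intro G_op_step_axioms.intro) auto
  have "0 \<le> H z" if "z \<in> {al..be}" for z
    using F_nonneg[OF that] F_le_H[OF that] by linarith
  then show ?thesis
    unfolding trop_rep_mult_le_2_def G_op_eq_H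
    by (intro exI[of _ S_ext] exI[of _ b] conjI ballI finite_trop_rep_H act_H_spread) auto
qed

lemma trop_rep_mult_le_2_fold:
  "trop_rep_mult_le_2 al be F \<Longrightarrow> \<forall>q\<in>set qs. q \<in> {al<..<be} \<Longrightarrow>
    trop_rep_mult_le_2 al be (fold (G_op al be) qs F)"
  by (induction qs arbitrary: F) (auto simp: trop_rep_mult_le_2_G_op)

lemma trop_rep_mult_le_2_imp_trop_poly:
  assumes "trop_rep_mult_le_2 al be F"
  shows "trop_poly al be F \<and> (\<forall>h\<in>nonsmooth_pts al be F. multiplicity_at F h \<le> 2)"
proof -
  obtain S c where "finite_trop_rep al be F S c" and nonneg: "\<forall>z\<in>{al..be}. 0 \<le> F z"
    and spread: "\<forall>z\<in>{al<..<be}. Max (active_slopes S c z) - Min (active_slopes S c z) \<le> 2"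
    using assms unfolding trop_rep_mult_le_2_def by blast
  then interpret finite_trop_rep al be F S c by simp
  have "trop_poly al be F"
    unfolding trop_poly_def using trop_series nonneg finite_nonsmooth_pts by blast
  moreover have "multiplicity_at F h \<le> 2" if "h \<in> nonsmooth_pts al be F" for h
  proof -
    have h: "h \<in> {al<..<be}" using that unfolding nonsmooth_pts_def by simp
    then have "Max (act h) - Min (act h) \<le> 2" using spread by blast
    then have "real_of_int (Max (act h) - Min (act h)) \<le> 2" by linarith
    then show ?thesis using multiplicity_at_eq[OF h] by simp
  qed
  ultimately show ?thesis by blast
qed

theorem mainTheorem4:
  fixes al be :: real and qs :: "real list"
  assumes "al < be"
    and "\<forall>q\<in>set qs. q \<in> {al<..<be}"
  defines "F \<equiv> fold (G_op al be) qs (\<lambda>z. 0)"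
  shows "trop_poly al be F \<and> (\<forall>h\<in>nonsmooth_pts al be F. multiplicity_at F h \<le> 2)"
proof -
  have "trop_rep_mult_le_2 al be F"
    unfolding F_def using trop_rep_mult_le_2_zero[OF assms(1)] assms(2) by (rule trop_rep_mult_le_2_fold)
  then show ?thesis by (rule trop_rep_mult_le_2_imp_trop_poly)
qed

end
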